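(* The function $g_1(y):=y\,\widehat\rho(y)(1-\widehat\omega(y))$ satisfies $g_1(\widehat\zeta(z))=\widehat\rho(\widehat\zeta(z))\,\big(\widehat\zeta(z)-z\widehat\zeta'(z)\big)$ for $z>0$, and $$\widehat v(y)\,g_1'(y)+g_1(y)>0\qquad\text{for all }y\in(0,y_* ).$$
   Context: LP profile: $(\widehat\rho,\widehat\omega)$ real-analytic, even, solving $\widehat\rho'=-\frac{2y\widehat\rho\widehat\omega(\widehat\rho-\widehat\omega)}{1-y^2\widehat\omega^2}$, $\widehat\omega'=\frac{1-3\widehat\omega}{y}+\frac{2y\widehat\omega^2(\widehat\rho-\widehat\omega)}{1-y^2\widehat\omega^2}$, $\widehat\omega(0)=\frac13$, $\widehat\rho(0)>\frac13$, $\widehat\omega\to1$, $y^2\widehat\rho\to\ell\in(0,\infty)$ at infinity, $\widehat\rho'<0<\widehat\omega'$ on $(0,\infty)$; $\widehat v:=y\widehat\omega$ has unique sonic point $y_*\in(2,3)$ with $\widehat v(y_* )=1$. $\widehat\zeta$: increasing solution of $z\widehat\zeta'=\widehat\zeta\,\widehat\omega(\widehat\zeta)$ with $z^{-1/3}\widehat\zeta(z)\to1$ as $z\to0$. *)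

theory Defs
  imports "HOL-Analysis.Analysis"
begin

definition real_analytic_on :: "(real \<Rightarrow> real) \<Rightarrow> real set \<Rightarrow> bool" where
  "real_analytic_on f S \<longleftrightarrow>
     (\<forall>x\<in>S. \<exists>r>0. \<exists>c::nat \<Rightarrow> real. \<forall>y. \<bar>y - x\<bar> < r \<longrightarrow> (\<lambda>n. c n * (y - x) ^ n) sums f y)"

definition LP_profile :: "(real \<Rightarrow> real) \<Rightarrow> (real \<Rightarrow> real) \<Rightarrow> real \<Rightarrow> real \<Rightarrow> bool" where
  "LP_profile \<rho> \<omega> L ys \<longleftrightarrow>
     real_analytic_on \<rho> UNIV \<and> real_analytic_on \<omega> UNIV \<and>
     (\<forall>y. \<rho> (-y) = \<rho> y) \<and> (\<forall>y. \<omega> (-y) = \<omega> y) \<and>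
     (\<forall>y>0. y\<^sup>2 * (\<omega> y)\<^sup>2 \<noteq> 1 \<longrightarrow>
        deriv \<rho> y = - (2 * y * \<rho> y * \<omega> y * (\<rho> y - \<omega> y)) / (1 - y\<^sup>2 * (\<omega> y)\<^sup>2) \<and>
        deriv \<omega> y = (1 - 3 * \<omega> y) / y + 2 * y * (\<omega> y)\<^sup>2 * (\<rho> y - \<omega> y) / (1 - y\<^sup>2 * (\<omega> y)\<^sup>2)) \<and>
     \<omega> 0 = 1/3 \<and> \<rho> 0 > 1/3 \<and>
     (\<omega> \<longlongrightarrow> 1) at_top \<and>
     0 < L \<and> ((\<lambda>y. y\<^sup>2 * \<rho> y) \<longlongrightarrow> L) at_top \<and>
     (\<forall>y>0. deriv \<rho> y < 0 \<and> 0 < deriv \<omega> y) \<and>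
     2 < ys \<and> ys < 3 \<and> (\<forall>y>0. y * \<omega> y = 1 \<longleftrightarrow> y = ys)"

definition LP_zeta :: "(real \<Rightarrow> real) \<Rightarrow> (real \<Rightarrow> real) \<Rightarrow> bool" where
  "LP_zeta \<omega> \<zeta> \<longleftrightarrow>
     strict_mono_on {0<..} \<zeta> \<and>
     (\<forall>z>0. (\<zeta> has_real_derivative deriv \<zeta> z) (at z) \<and> z * deriv \<zeta> z = \<zeta> z * \<omega> (\<zeta> z)) \<and>
     ((\<lambda>z. z powr (-1/3) * \<zeta> z) \<longlongrightarrow> 1) (at_right 0)"

end

theory Submission
  imports Defs
begin

(* With v = y \<omega> and the coupling G = 2 v^2 (\<rho> - \<omega>) / (1 - v^2), the profile equations read
   \<rho>' = - \<rho> G / v and \<omega>' = (1 - 3 \<omega> + G) / y, and a direct computation gives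
   v g1' + g1 = y \<rho> (P(\<omega>) - G) with the threshold P(w) = 1 - w + 2 w^2. So it suffices that the
   gap F = 2 v^2 (\<rho> - \<omega>) - P(\<omega>) (1 - v^2) = (1 - v^2) (G - P(\<omega>)) is negative on (0, ys).
   At the sonic point G has three limits: from the \<rho>-equation, from the \<omega>-equation, and as a
   quotient of two functions vanishing at ys. Comparing them forces G \<rightarrow> \<omega>(ys) < P(\<omega>(ys)),
   so F < 0 near ys. At every zero of F in (0, ys) one computes F' > 0, so F stays negative
   all the way down to 0. *)

lemma real_analytic_on_UNIV_C1:
  assumes "real_analytic_on f UNIV"
  shows "(f has_real_derivative deriv f x) (at x)" and "isCont (deriv f) x"
proof -
  obtain r c where r: "r > 0"
    and sums: "\<And>y. \<bar>y - x\<bar> < r \<Longrightarrow> (\<lambda>n. c n * (y - x) ^ n) sums f y"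
    using assms unfolding real_analytic_on_def by blast
  define S' where "S' = (\<lambda>h::real. \<Sum>n. diffs c n * h ^ n)"
  have summable: "summable (\<lambda>n. c n * h ^ n)" if "norm h < r" for h
    using sums[of "x + h"] that by (simp add: sums_iff)
  have summable': "summable (\<lambda>n. diffs c n * h ^ n)" if "norm h < r" for h
    using termdiff_converges[OF _ summable] that by blast
  have near: "\<forall>\<^sub>F t in nhds y. \<bar>t - x\<bar> < r" if "\<bar>y - x\<bar> < r" for y
    using that by (intro eventually_nhds_in_open[of "{t. \<bar>t - x\<bar> < r}", simplified])
      (auto intro!: open_Collect_less continuous_intros)
  have has_deriv: "(f has_real_derivative S' (y - x)) (at y)" if y: "\<bar>y - x\<bar> < r" for y
  proof -
    have "((\<lambda>h. \<Sum>n. c n * h ^ n) has_real_derivative S' (y - x)) (at (y - x))"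
      unfolding S'_def by (rule termdiffs_strong'[OF summable]) (use y in auto)
    moreover have "((\<lambda>t. t - x) has_real_derivative 1) (at y)"
      by (auto intro!: derivative_eq_intros)
    ultimately have "((\<lambda>t. \<Sum>n. c n * (t - x) ^ n) has_real_derivative S' (y - x)) (at y)"
      using DERIV_chain2 by fastforce
    moreover have "\<forall>\<^sub>F t in nhds y. (\<Sum>n. c n * (t - x) ^ n) = f t"
      using near[OF y] by eventually_elim (use sums in \<open>auto simp: sums_iff\<close>)
    ultimately show ?thesis by (subst DERIV_cong_ev[OF refl _ refl, symmetric])
  qed
  then show "(f has_real_derivative deriv f x) (at x)"
    using r by (metis DERIV_imp_deriv abs_0 diff_self)
  have "\<forall>\<^sub>F t in nhds x. \<bar>t - x\<bar> < r"
    using near[of x] r by simp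
  then have "\<forall>\<^sub>F t in nhds x. deriv f t = S' (t - x)"
    by eventually_elim (use has_deriv DERIV_imp_deriv in blast)
  moreover have "isCont (\<lambda>t. S' (t - x)) x"
  proof -
    have "isCont S' 0"
      unfolding S'_def using termdiffs_strong'[of r "diffs c" 0, OF summable'] r
      by (auto intro: DERIV_isCont)
    moreover have "isCont (\<lambda>t. t - x) x" by simp
    ultimately show ?thesis using isCont_o2 by fastforce
  qed
  ultimately show "isCont (deriv f) x" using isCont_cong by force
qed

lemma tendsto_divide_at_common_zero:
  fixes f g :: "real \<Rightarrow> real"
  assumes "(f has_real_derivative f') (at a)" and "(g has_real_derivative g') (at a)"
    and "f a = 0" and "g a = 0" and "g' \<noteq> 0"
  shows "((\<lambda>x. f x / g x) \<longlongrightarrow> f' / g') (at a)"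
proof -
  have "((\<lambda>x. ((f x - f a) / (x - a)) / ((g x - g a) / (x - a))) \<longlongrightarrow> f' / g') (at a)"
    using assms(1,2,5) by (intro tendsto_divide) (auto simp: has_field_derivative_iff)
  moreover have "\<forall>\<^sub>F x in at a. ((f x - f a) / (x - a)) / ((g x - g a) / (x - a)) = f x / g x"
    using assms(3,4) by (auto simp: eventually_at_filter)
  ultimately show ?thesis by (simp add: tendsto_cong)
qed

lemma isCont_tendsto_at_left: "isCont f x \<Longrightarrow> (f \<longlongrightarrow> f x) (at_left x)"
  for f :: "real \<Rightarrow> real"
  by (simp add: isCont_def filterlim_at_split)

lemma eventually_at_right_pos_if_upcrossing:
  fixes F :: "real \<Rightarrow> real"
  assumes "isCont F m" and "0 \<le> F m"
    and upcrossing: "F m = 0 \<Longrightarrow> \<exists>d>0. (F has_real_derivative d) (at m)"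
  shows "\<forall>\<^sub>F t in at_right m. 0 < F t"
proof (cases "F m = 0")
  case True
  then obtain d where "d > 0" "(F has_real_derivative d) (at m)"
    using upcrossing by auto
  then obtain h where "h > 0" and "\<And>s. 0 < s \<Longrightarrow> s < h \<Longrightarrow> F m < F (m + s)"
    using DERIV_pos_inc_right by blast
  then show ?thesis
    using True by (auto simp: eventually_at_right_to_0[of _ m] eventually_at_right add.commute
      intro!: exI[of _ h])
next
  case False
  then have "(F \<longlongrightarrow> F m) (at_right m)" and "0 < F m"
    using assms by (auto simp: isCont_def filterlim_at_split)
  then show ?thesis using order_tendstoD(1) by blast
qed

lemma negative_if_zeros_upcrossing:
  fixes F :: "real \<Rightarrow> real"
  assumes cont: "\<And>t. a < t \<Longrightarrow> t < b \<Longrightarrow> isCont F t"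
    and near_b: "\<forall>\<^sub>F t in at_left b. F t < 0"
    and upcrossing: "\<And>t. a < t \<Longrightarrow> t < b \<Longrightarrow> F t = 0 \<Longrightarrow> \<exists>d>0. (F has_real_derivative d) (at t)"
    and y: "a < y" "y < b"
  shows "F y < 0"
proof (rule ccontr)
  assume "\<not> F y < 0"
  obtain b' where "b' < b" and b': "\<And>t. b' < t \<Longrightarrow> t < b \<Longrightarrow> F t < 0"
    using near_b y by (auto simp: eventually_at_left)
  define c where "c = (max b' y + b) / 2"
  have c: "y < c" "b' < c" "c < b" "F c < 0"
    using \<open>b' < b\<close> y b' unfolding c_def by auto
  define S where "S = {t \<in> {y..c}. 0 \<le> F t}"
  have "closed S"
    unfolding S_def using y c cont
    by (intro continuous_on_closed_Collect_le continuous_on_const continuous_at_imp_continuous_on)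
      auto
  moreover have "y \<in> S" and "bdd_above S"
    using \<open>\<not> F y < 0\<close> c unfolding S_def by auto
  ultimately have "Sup S \<in> S" using closed_contains_Sup by blast
  define m where "m = Sup S"
  have m: "y \<le> m" "m < c" "0 \<le> F m"
    using \<open>Sup S \<in> S\<close> c unfolding m_def S_def by (auto simp: less_le)
  have after_m: "F t < 0" if "m < t" "t < b" for t
  proof (cases "t \<le> c")
    case True
    then have "t \<notin> S" using cSup_upper[OF _ \<open>bdd_above S\<close>, of t] that unfolding m_def by auto
    then show ?thesis using True that m unfolding S_def by auto
  next
    case False
    then show ?thesis using b' c that by auto
  qed
  have "\<forall>\<^sub>F t in at_right m. 0 < F t"
    using y m c cont upcrossing by (intro eventually_at_right_pos_if_upcrossing) auto
  moreover have "\<forall>\<^sub>F t in at_right m. m < t \<and> t < b"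
    using eventually_at_right_real[of m b] m c by auto
  ultimately have "\<forall>\<^sub>F t in at_right m. False"
    by eventually_elim (use after_m in force)
  then show False by (simp add: trivial_limit_at_right_real)
qed

lemma cubic_pos_on_unit_interval:
  fixes w :: real
  assumes "0 < w" "w < 1"
  shows "0 < 3 - 3 * w - 2 * w^2 + 4 * w^3"
proof (cases "w \<ge> 1/2")
  case True
  have "0 < 3 * (1 - w) + 2 * w^2 * (2 * w - 1)"
    using True assms by (intro add_pos_nonneg) auto
  also have "\<dots> = 3 - 3 * w - 2 * w^2 + 4 * w^3"
    by (simp add: algebra_simps power2_eq_square power3_eq_cube)
  finally show ?thesis .
next
  case False
  then have "w^2 \<le> 1/4" using assms power_mono[of w "1/2" 2] by (simp add: power2_eq_square)
  moreover have "0 \<le> w^3" using assms by simp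
  ultimately show ?thesis using False by linarith
qed

definition threshold :: "real \<Rightarrow> real" where
  "threshold w = 1 - w + 2 * w^2"

lemma less_threshold: "w < threshold w" for w :: real
proof -
  have "0 < (1 - w)^2 + w^2"
    by (cases "w = 1") (simp_all add: add_pos_nonneg)
  then show ?thesis unfolding threshold_def by (simp add: power2_eq_square algebra_simps)
qed

(* The expression shown positive is the derivative of the gap 2 v^2 (r - w) - threshold w (1 - v^2)
   at one of its zeros, where the equations for r' = rd and w' = wd take the form assumed here. *)
lemma gap_derivative_pos_algebra:
  fixes y w r rd wd :: real
  defines "v \<equiv> y * w"
  assumes y: "0 < y" and w: "0 < w" "w < 1" and subsonic: "v^2 < 1"
    and gap_zero: "2 * v^2 * (r - w) = threshold w * (1 - v^2)"
    and rd: "rd = - r * threshold w / v" and wd: "wd = (1 - 3 * w + threshold w) / y"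
  shows "0 < 4 * v * (w + y * wd) * (r - w) + 2 * v^2 * (rd - wd)
             + (1 - 4 * w) * wd * (1 - v^2) + 2 * threshold w * v * (w + y * wd)"
    (is "0 < ?E")
proof -
  define C0 where "C0 = (1 - w) * (3 - 3 * w - 2 * w^2 + 4 * w^3)"
  define C1 where "C1 = 4 * (1 - w)^2 * ((1 - w)^2 + w^2)"
  have v: "0 < v" using y w unfolding v_def by simp
  have r: "r = w + threshold w * (1 - v^2) / (2 * v^2)" using gap_zero v by (simp add: field_simps)
  have "v * ?E = (1 - v^2) * C0 + v^2 * C1"
    unfolding rd wd r C0_def C1_def threshold_def v_def using y w
    by (simp add: field_simps power2_eq_square power3_eq_cube)
  moreover have "0 < C0" "0 < C1"
    using w cubic_pos_on_unit_interval[OF w] unfolding C0_def C1_def by (simp_all add: add_pos_nonneg)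
  ultimately have "0 < v * ?E" using subsonic v by (simp add: add_pos_pos)
  then show ?thesis using v by (simp add: zero_less_mult_iff)
qed

locale LP_profile_setting =
  fixes \<rho> \<omega> :: "real \<Rightarrow> real" and L ys :: real
  assumes profile: "LP_profile \<rho> \<omega> L ys"
begin

lemma
  shows analytic_rho: "real_analytic_on \<rho> UNIV"
    and analytic_omega: "real_analytic_on \<omega> UNIV"
    and profile_ode: "\<And>y. 0 < y \<Longrightarrow> y\<^sup>2 * (\<omega> y)\<^sup>2 \<noteq> 1 \<Longrightarrow>
        deriv \<rho> y = - (2 * y * \<rho> y * \<omega> y * (\<rho> y - \<omega> y)) / (1 - y\<^sup>2 * (\<omega> y)\<^sup>2) \<and>
        deriv \<omega> y = (1 - 3 * \<omega> y) / y + 2 * y * (\<omega> y)\<^sup>2 * (\<rho> y - \<omega> y) / (1 - y\<^sup>2 * (\<omega> y)\<^sup>2)"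
    and omega_0: "\<omega> 0 = 1/3"
    and omega_tendsto: "(\<omega> \<longlongrightarrow> 1) at_top"
    and rho_decay: "((\<lambda>y. y\<^sup>2 * \<rho> y) \<longlongrightarrow> L) at_top" "0 < L"
    and deriv_rho_neg: "\<And>y. 0 < y \<Longrightarrow> deriv \<rho> y < 0"
    and deriv_omega_pos: "\<And>y. 0 < y \<Longrightarrow> 0 < deriv \<omega> y"
    and sonic_point_pos: "0 < ys"
    and sonic_iff: "\<And>y. 0 < y \<Longrightarrow> y * \<omega> y = 1 \<longleftrightarrow> y = ys"
  using profile unfolding LP_profile_def by auto

lemma has_real_derivative_rho: "(\<rho> has_real_derivative deriv \<rho> x) (at x)"
  and has_real_derivative_omega: "(\<omega> has_real_derivative deriv \<omega> x) (at x)"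
  and isCont_deriv_rho: "isCont (deriv \<rho>) x"
  and isCont_deriv_omega: "isCont (deriv \<omega>) x"
  using analytic_rho analytic_omega by (simp_all add: real_analytic_on_UNIV_C1)

lemma isCont_rho: "isCont \<rho> x" and isCont_omega: "isCont \<omega> x"
  using has_real_derivative_rho has_real_derivative_omega by (blast intro: DERIV_isCont)+

lemma omega_strict_mono:
  assumes "0 \<le> a" "a < b" shows "\<omega> a < \<omega> b"
proof (rule DERIV_pos_imp_increasing_open[OF \<open>a < b\<close>])
  show "\<exists>d. (\<omega> has_real_derivative d) (at x) \<and> 0 < d" if "a < x" "x < b" for x
    using that assms has_real_derivative_omega deriv_omega_pos[of x] by auto
qed (use isCont_omega in \<open>simp add: continuous_at_imp_continuous_on\<close>)

lemma rho_strict_antimono: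
  assumes "0 \<le> a" "a < b" shows "\<rho> b < \<rho> a"
proof (rule DERIV_neg_imp_decreasing_open[OF \<open>a < b\<close>])
  show "\<exists>d. (\<rho> has_real_derivative d) (at x) \<and> d < 0" if "a < x" "x < b" for x
    using that assms has_real_derivative_rho deriv_rho_neg[of x] by auto
qed (use isCont_rho in \<open>simp add: continuous_at_imp_continuous_on\<close>)

lemma omega_gt_third: "0 < y \<Longrightarrow> 1/3 < \<omega> y"
  using omega_strict_mono[of 0 y] omega_0 by simp

lemma omega_less_one:
  assumes "0 \<le> y" shows "\<omega> y < 1"
proof -
  have "\<forall>\<^sub>F t in at_top. \<omega> (y + 1) \<le> \<omega> t"
    using eventually_gt_at_top[of "y + 1"]
    by eventually_elim (use assms omega_strict_mono in \<open>simp add: less_imp_le\<close>)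
  then have "\<omega> (y + 1) \<le> 1"
    using tendsto_lowerbound[OF omega_tendsto] by simp
  then show ?thesis using omega_strict_mono[of y "y + 1"] assms by simp
qed

lemma rho_pos:
  assumes "0 \<le> y" shows "0 < \<rho> y"
proof -
  have "\<forall>\<^sub>F t in at_top. 0 < t\<^sup>2 * \<rho> t \<and> y < t"
    by (intro eventually_conj order_tendstoD(1)[OF rho_decay] eventually_gt_at_top)
  then obtain t where "0 < t\<^sup>2 * \<rho> t" "y < t"
    using eventually_happens'[OF trivial_limit_at_top_linorder] by blast
  then show ?thesis using rho_strict_antimono[of y t] assms by (simp add: zero_less_mult_iff)
qed

lemma sonic_point: "ys * \<omega> ys = 1"
  using sonic_iff sonic_point_pos by blast

lemma subsonic:
  assumes "0 < y" "y < ys" shows "y * \<omega> y < 1"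
proof (rule ccontr)
  assume "\<not> y * \<omega> y < 1"
  moreover have "continuous_on {0..y} (\<lambda>t. t * \<omega> t)"
    using isCont_omega by (intro continuous_intros continuous_at_imp_continuous_on) auto
  ultimately obtain x where "0 \<le> x" "x \<le> y" "x * \<omega> x = 1"
    using IVT'[of "\<lambda>t. t * \<omega> t" 0 1 y] assms by auto
  moreover have "x \<noteq> 0" using \<open>x * \<omega> x = 1\<close> by auto
  ultimately have "x = ys" using sonic_iff[of x] by simp
  then show False using \<open>x \<le> y\<close> assms by simp
qed

definition sonic_denom :: "real \<Rightarrow> real" where
  "sonic_denom y = 1 - (y * \<omega> y)^2"

definition coupling :: "real \<Rightarrow> real" where
  "coupling y = 2 * (y * \<omega> y)^2 * (\<rho> y - \<omega> y) / sonic_denom y"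

definition gap :: "real \<Rightarrow> real" where
  "gap y = 2 * (y * \<omega> y)^2 * (\<rho> y - \<omega> y) - threshold (\<omega> y) * sonic_denom y"

lemma sonic_denom_pos:
  assumes "0 < y" "y < ys" shows "0 < sonic_denom y"
proof -
  have "0 < y * \<omega> y" using assms omega_gt_third[of y] by simp
  then have "(y * \<omega> y)^2 < 1" using subsonic[OF assms] by (simp add: power_less_one_iff)
  then show ?thesis unfolding sonic_denom_def by simp
qed

lemma sonic_denom_sonic: "sonic_denom ys = 0"
  using sonic_point unfolding sonic_denom_def by simp

lemma ode_coupling:
  assumes "0 < y" "y < ys"
  shows ode_coupling_rho: "deriv \<rho> y = - \<rho> y * coupling y / (y * \<omega> y)"
    and ode_coupling_omega: "deriv \<omega> y = (1 - 3 * \<omega> y + coupling y) / y"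
proof -
  have D: "1 - y\<^sup>2 * (\<omega> y)\<^sup>2 \<noteq> 0"
    using sonic_denom_pos[OF assms] unfolding sonic_denom_def by (simp add: power_mult_distrib)
  then have ode: "deriv \<rho> y = - (2 * y * \<rho> y * \<omega> y * (\<rho> y - \<omega> y)) / (1 - y\<^sup>2 * (\<omega> y)\<^sup>2)"
      "deriv \<omega> y = (1 - 3 * \<omega> y) / y + 2 * y * (\<omega> y)\<^sup>2 * (\<rho> y - \<omega> y) / (1 - y\<^sup>2 * (\<omega> y)\<^sup>2)"
    using profile_ode[of y] assms by auto
  have "\<omega> y \<noteq> 0" using omega_gt_third[of y] assms by simp
  then show "deriv \<rho> y = - \<rho> y * coupling y / (y * \<omega> y)"
    and "deriv \<omega> y = (1 - 3 * \<omega> y + coupling y) / y"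
    unfolding ode coupling_def sonic_denom_def using assms D
    by (simp_all add: field_simps power_mult_distrib power2_eq_square)
qed

lemma eventually_subsonic: "\<forall>\<^sub>F y in at_left ys. 0 < y \<and> y < ys"
  using eventually_at_left_real[OF sonic_point_pos] by eventually_elim auto

lemma coupling_tendsto_rho: "(coupling \<longlongrightarrow> - deriv \<rho> ys / \<rho> ys) (at_left ys)"
proof -
  have "isCont (\<lambda>y. - (y * \<omega> y) * deriv \<rho> y / \<rho> y) ys"
    using rho_pos[of ys] sonic_point_pos
    by (intro continuous_intros isCont_rho isCont_omega isCont_deriv_rho) auto
  from isCont_tendsto_at_left[OF this]
  have "((\<lambda>y. - (y * \<omega> y) * deriv \<rho> y / \<rho> y) \<longlongrightarrow> - deriv \<rho> ys / \<rho> ys) (at_left ys)"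
    using sonic_point by simp
  moreover have "\<forall>\<^sub>F y in at_left ys. - (y * \<omega> y) * deriv \<rho> y / \<rho> y = coupling y"
    using eventually_subsonic
  proof eventually_elim
    case (elim y)
    then show ?case
      using ode_coupling_rho[of y] rho_pos[of y] omega_gt_third[of y] by (simp add: field_simps)
  qed
  ultimately show ?thesis by (simp add: tendsto_cong)
qed

lemma rho_eq_omega_sonic: "\<rho> ys = \<omega> ys"
proof -
  have "isCont (\<lambda>y. 2 * (y * \<omega> y)^2 * (\<rho> y - \<omega> y)) ys"
    by (intro continuous_intros isCont_rho isCont_omega)
  from isCont_tendsto_at_left[OF this]
  have "((\<lambda>y. 2 * (y * \<omega> y)^2 * (\<rho> y - \<omega> y)) \<longlongrightarrow> 2 * (\<rho> ys - \<omega> ys)) (at_left ys)"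
    using sonic_point by simp
  moreover have "((\<lambda>y. coupling y * sonic_denom y) \<longlongrightarrow> 0) (at_left ys)"
  proof -
    have "isCont sonic_denom ys"
      unfolding sonic_denom_def by (intro continuous_intros isCont_omega)
    from tendsto_mult[OF coupling_tendsto_rho isCont_tendsto_at_left[OF this]]
    show ?thesis by (simp add: sonic_denom_sonic)
  qed
  moreover have "\<forall>\<^sub>F y in at_left ys. coupling y * sonic_denom y = 2 * (y * \<omega> y)^2 * (\<rho> y - \<omega> y)"
    using eventually_subsonic
  proof eventually_elim
    case (elim y)
    then have "sonic_denom y \<noteq> 0" using sonic_denom_pos by force
    then show ?case by (simp add: coupling_def)
  qed
  ultimately show ?thesis
    using tendsto_unique[OF trivial_limit_at_left_real] by (force simp: tendsto_cong)
qed

lemma coupling_tendsto_omega: "(coupling \<longlongrightarrow> ys * deriv \<omega> ys - 1 + 3 * \<omega> ys) (at_left ys)"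
proof -
  have "isCont (\<lambda>y. y * deriv \<omega> y - 1 + 3 * \<omega> y) ys"
    by (intro continuous_intros isCont_omega isCont_deriv_omega)
  from isCont_tendsto_at_left[OF this]
  have "((\<lambda>y. y * deriv \<omega> y - 1 + 3 * \<omega> y) \<longlongrightarrow> ys * deriv \<omega> ys - 1 + 3 * \<omega> ys) (at_left ys)"
    by simp
  moreover have "\<forall>\<^sub>F y in at_left ys. y * deriv \<omega> y - 1 + 3 * \<omega> y = coupling y"
    using eventually_subsonic by eventually_elim (simp add: ode_coupling_omega)
  ultimately show ?thesis by (simp add: tendsto_cong)
qed

lemma coupling_tendsto_quotient:
  "(coupling \<longlongrightarrow> (deriv \<omega> ys - deriv \<rho> ys) / (\<omega> ys + ys * deriv \<omega> ys)) (at_left ys)"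
proof -
  have "(sonic_denom has_real_derivative - 2 * (ys * \<omega> ys) * (\<omega> ys + ys * deriv \<omega> ys)) (at ys)"
    unfolding sonic_denom_def [abs_def]
    by (rule derivative_eq_intros has_real_derivative_omega refl | simp add: algebra_simps)+
  moreover have pos: "0 < \<omega> ys + ys * deriv \<omega> ys"
    using omega_gt_third[OF sonic_point_pos] deriv_omega_pos[OF sonic_point_pos] sonic_point_pos
    by (simp add: add_pos_pos)
  ultimately have "((\<lambda>y. (\<rho> y - \<omega> y) / sonic_denom y)
      \<longlongrightarrow> (deriv \<rho> ys - deriv \<omega> ys) / (- 2 * (\<omega> ys + ys * deriv \<omega> ys))) (at ys)"
    using sonic_point
    by (intro tendsto_divide_at_common_zero derivative_intros has_real_derivative_rho
        has_real_derivative_omega) (auto simp: rho_eq_omega_sonic sonic_denom_sonic add_pos_pos)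
  moreover have "isCont (\<lambda>y. 2 * (y * \<omega> y)^2) ys"
    by (intro continuous_intros isCont_omega)
  then have "((\<lambda>y. 2 * (y * \<omega> y)^2) \<longlongrightarrow> 2) (at ys)"
    using sonic_point by (simp add: isCont_def)
  ultimately have "(coupling \<longlongrightarrow> 2 * ((deriv \<rho> ys - deriv \<omega> ys) / (- 2 * (\<omega> ys + ys * deriv \<omega> ys)))) (at ys)"
    unfolding coupling_def times_divide_eq_right[symmetric] by (intro tendsto_mult)
  then have "(coupling \<longlongrightarrow> 2 * ((deriv \<rho> ys - deriv \<omega> ys) / (- 2 * (\<omega> ys + ys * deriv \<omega> ys))))
      (at_left ys)"
    by (simp only: filterlim_at_split)
  moreover have "2 * ((deriv \<rho> ys - deriv \<omega> ys) / (- 2 * (\<omega> ys + ys * deriv \<omega> ys)))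
      = (deriv \<omega> ys - deriv \<rho> ys) / (\<omega> ys + ys * deriv \<omega> ys)"
    using pos by (simp add: field_simps)
  ultimately show ?thesis by simp
qed

lemma coupling_tendsto_sonic: "(coupling \<longlongrightarrow> \<omega> ys) (at_left ys)"
proof -
  define w a b where "w = \<omega> ys" and "a = deriv \<rho> ys" and "b = deriv \<omega> ys"
  define g where "g = - a / w"
  have limits: "(coupling \<longlongrightarrow> g) (at_left ys)" "(coupling \<longlongrightarrow> ys * b - 1 + 3 * w) (at_left ys)"
      "(coupling \<longlongrightarrow> (b - a) / (w + ys * b)) (at_left ys)"
    using coupling_tendsto_rho coupling_tendsto_omega coupling_tendsto_quotient
    unfolding g_def w_def a_def b_def rho_eq_omega_sonic by simp_all
  have "0 < w" "0 < ys * b" "ys * w = 1"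
    using omega_gt_third[OF sonic_point_pos] deriv_omega_pos[OF sonic_point_pos] sonic_point_pos
      sonic_point unfolding w_def b_def by auto
  have g1: "g = ys * b - 1 + 3 * w"
    by (rule tendsto_unique[OF trivial_limit_at_left_real limits(1,2)])
  have g2: "g = (b - a) / (w + ys * b)"
    by (rule tendsto_unique[OF trivial_limit_at_left_real limits(1,3)])
  have a: "a = - g * w" using \<open>0 < w\<close> unfolding g_def by simp
  have "b = (ys * w) * b" using \<open>ys * w = 1\<close> by simp
  also have "\<dots> = w * (g + 1 - 3 * w)" using g1 by (simp add: algebra_simps)
  finally have b: "b = w * (g + 1 - 3 * w)" .
  have yb: "ys * b = g + 1 - 3 * w" using g1 by simp
  have "g * (w + ys * b) = b - a"
    using g2 \<open>0 < w\<close> \<open>0 < ys * b\<close> by (simp add: field_simps)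
  then have "g * (w + (g + 1 - 3 * w)) = w * (g + 1 - 3 * w) + g * w"
    unfolding yb by (simp add: a b)
  then have "(g - w) * (g + 1 - 3 * w) = 0"
    by (simp add: algebra_simps)
  moreover have "0 < g + 1 - 3 * w" using yb \<open>0 < ys * b\<close> by simp
  ultimately have "g = w" by simp
  then show ?thesis using limits(1) unfolding w_def by simp
qed

lemma gap_eq:
  assumes "0 < y" "y < ys"
  shows "gap y = sonic_denom y * (coupling y - threshold (\<omega> y))"
  using sonic_denom_pos[OF assms] unfolding gap_def coupling_def by (simp add: field_simps)

lemma isCont_gap: "isCont gap y"
  unfolding gap_def sonic_denom_def threshold_def
  by (intro continuous_intros isCont_rho isCont_omega)

lemma gap_neg_near_sonic: "\<forall>\<^sub>F y in at_left ys. gap y < 0"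
proof -
  have "isCont (\<lambda>y. threshold (\<omega> y)) ys"
    unfolding threshold_def by (intro continuous_intros isCont_omega)
  from tendsto_diff[OF coupling_tendsto_sonic isCont_tendsto_at_left[OF this]]
  have "\<forall>\<^sub>F y in at_left ys. coupling y - threshold (\<omega> y) < 0"
    by (rule order_tendstoD(2)) (simp add: less_threshold)
  with eventually_subsonic show ?thesis
    by eventually_elim (simp add: gap_eq sonic_denom_pos mult_pos_neg)
qed

lemma gap_upcrossing:
  assumes y: "0 < y" "y < ys" and zero: "gap y = 0"
  shows "\<exists>d>0. (gap has_real_derivative d) (at y)"
proof -
  let ?w = "\<omega> y" and ?v = "y * \<omega> y"
  have "(gap has_real_derivative
      4 * ?v * (?w + y * deriv \<omega> y) * (\<rho> y - ?w) + 2 * ?v^2 * (deriv \<rho> y - deriv \<omega> y)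
      + (1 - 4 * ?w) * deriv \<omega> y * (1 - ?v^2) + 2 * threshold ?w * ?v * (?w + y * deriv \<omega> y)) (at y)"
    unfolding gap_def [abs_def] sonic_denom_def threshold_def
    by (rule derivative_eq_intros has_real_derivative_rho has_real_derivative_omega refl
        | simp add: algebra_simps power2_eq_square)+
  moreover have "coupling y = threshold ?w"
    using zero gap_eq[OF y] sonic_denom_pos[OF y] by simp
  then have "0 < 4 * ?v * (?w + y * deriv \<omega> y) * (\<rho> y - ?w) + 2 * ?v^2 * (deriv \<rho> y - deriv \<omega> y)
      + (1 - 4 * ?w) * deriv \<omega> y * (1 - ?v^2) + 2 * threshold ?w * ?v * (?w + y * deriv \<omega> y)"
    using y omega_gt_third[of y] omega_less_one[of y] sonic_denom_pos[OF y] zero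
    by (intro gap_derivative_pos_algebra)
      (auto simp: ode_coupling gap_def sonic_denom_def)
  ultimately show ?thesis by blast
qed

lemma gap_neg:
  assumes "0 < y" "y < ys" shows "gap y < 0"
  using isCont_gap gap_neg_near_sonic gap_upcrossing assms
  by (rule negative_if_zeros_upcrossing)

lemma g1_transport_eq:
  assumes y: "0 < y" "y < ys"
  shows "(y * \<omega> y) * deriv (\<lambda>y. y * \<rho> y * (1 - \<omega> y)) y + y * \<rho> y * (1 - \<omega> y)
    = y * \<rho> y * (threshold (\<omega> y) - coupling y)"
proof -
  have "((\<lambda>y. y * \<rho> y * (1 - \<omega> y)) has_real_derivative
      \<rho> y * (1 - \<omega> y) + y * deriv \<rho> y * (1 - \<omega> y) - y * \<rho> y * deriv \<omega> y) (at y)"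
    by (rule derivative_eq_intros has_real_derivative_rho has_real_derivative_omega refl
        | simp add: algebra_simps)+
  then show ?thesis
    using y omega_gt_third[of y]
    by (simp add: DERIV_imp_deriv ode_coupling threshold_def field_simps power2_eq_square)
qed

lemma coupling_less_threshold:
  assumes "0 < y" "y < ys" shows "coupling y < threshold (\<omega> y)"
  using gap_neg[OF assms] gap_eq[OF assms] sonic_denom_pos[OF assms]
  by (simp add: mult_less_0_iff)

end

theorem lemmaL:
  fixes \<rho> \<omega> \<zeta> :: "real \<Rightarrow> real" and L ys :: real
  assumes "LP_profile \<rho> \<omega> L ys" and "LP_zeta \<omega> \<zeta>"
  defines "g1 \<equiv> \<lambda>y. y * \<rho> y * (1 - \<omega> y)"
  shows "(\<forall>z>0. g1 (\<zeta> z) = \<rho> (\<zeta> z) * (\<zeta> z - z * deriv \<zeta> z)) \<and>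
         (\<forall>y. 0 < y \<and> y < ys \<longrightarrow> (y * \<omega> y) * deriv g1 y + g1 y > 0)"
proof (intro conjI allI impI)
  fix z :: real
  assume "0 < z"
  then have "z * deriv \<zeta> z = \<zeta> z * \<omega> (\<zeta> z)"
    using assms(2) unfolding LP_zeta_def by blast
  then show "g1 (\<zeta> z) = \<rho> (\<zeta> z) * (\<zeta> z - z * deriv \<zeta> z)"
    unfolding g1_def by (simp add: algebra_simps)
next
  fix y :: real
  assume y: "0 < y \<and> y < ys"
  interpret LP_profile_setting \<rho> \<omega> L ys by standard (rule assms(1))
  have "0 < y * \<rho> y * (threshold (\<omega> y) - coupling y)"
    using y rho_pos[of y] coupling_less_threshold[of y] by simp
  then show "(y * \<omega> y) * deriv g1 y + g1 y > 0"
    using g1_transport_eq[of y] y unfolding g1_def by simp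
qed

end
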